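(* For positive integers $a<b\le c$, $$S(bac;t,x)=\frac{t^3x^{a+b+c}\bigl(1+tx^c(1+x+\cdots+x^{b-a-1})\bigr)}{(1-x-tx)\,\psi_{a,b,c}(t,x)+t^3x^{a+b+c}\bigl(1+tx^c(1+x+\cdots+x^{b-a-1})\bigr)},$$ where $$\psi_{a,b,c}(t,x)=(1-x)^2+tx^c(1-x)+t^2x^{a+c}+t^3x^{a+2c}(1+x+\cdots+x^{b-a-1}).$$
   Context: $\mathbb{P}^*$ is the set of finite words over the positive integers (usual order); $bac$ denotes the three-letter word with letters $b,a,c$. For $w=w_1\ldots w_n$, $\mathrm{wt}(w)=t^nx^{\sum_i w_i}$. An embedding of $u$ into $w$ is a string of $|u|$ consecutive letters of $w$ whose $i$-th letter is $\ge$ the $i$-th letter of $u$ for every $i$. $\mathcal{S}(u)$ is the set of words $w$ admitting an embedding of $u$ such that the last $|u|$ letters of $w$ form the only embedding of $u$ into $w$, and $S(u;t,x)=\sum_{w\in\mathcal{S}(u)}\mathrm{wt}(w)$. *)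

theory Defs
  imports "HOL-Analysis.Analysis"
begin

definition pwords :: "nat list set" where
  "pwords = {w. \<forall>i\<in>set w. 1 \<le> i}"

definition embeds_at :: "nat list \<Rightarrow> nat list \<Rightarrow> nat \<Rightarrow> bool" where
  "embeds_at u w i \<longleftrightarrow> i + length u \<le> length w \<and> (\<forall>j<length u. u ! j \<le> w ! (i + j))"

definition Sset :: "nat list \<Rightarrow> nat list set" where
  "Sset u = {w \<in> pwords. length u \<le> length w \<and>
      embeds_at u w (length w - length u) \<and>
      (\<forall>i. embeds_at u w i \<longrightarrow> i = length w - length u)}"

definition wt :: "real \<Rightarrow> real \<Rightarrow> nat list \<Rightarrow> real" where
  "wt t x w = t ^ length w * x ^ sum_list w"

end

theory Submission
  imports Defs
begin

text \<open>
  A word lies in S(bac) exactly when the first occurrence of the pattern (a letter \<ge> b, then one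
  \<ge> a, then one \<ge> c) ends at its last letter. This is decided by a small automaton whose
  state records whether the word read so far ends with a letter \<ge> b, and whether it ends with
  two letters \<ge> (b, a). Splitting off the first letter shows that the generating functions
  of the four state languages satisfy a linear system whose coefficients are the weights of a
  single letter from the ranges [1,a), [a,b), [b,c) and [c,\<infinity>). Eliminating three unknowns
  gives one linear relation for the generating function of S(bac); its coefficient is positive
  because the letter weights have total absolute value below 1, and clearing the denominators
  (1-x) turns the solution into the stated rational function.
\<close>

lemma wt_Nil [simp]: "wt t x [] = 1"
  by (simp add: wt_def)

lemma wt_Cons: "wt t x (y # v) = t * x^y * wt t x v"
  by (simp add: wt_def algebra_simps power_add)

lemma pwords_Nil [simp]: "[] \<in> pwords"
  by (simp add: pwords_def)

lemma pwords_Cons [simp]: "y # v \<in> pwords \<longleftrightarrow> 1 \<le> y \<and> v \<in> pwords"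
  by (auto simp: pwords_def)

definition pwords_len :: "nat \<Rightarrow> nat list set" where
  "pwords_len n = {w \<in> pwords. length w = n}"

lemma pwords_len_Suc: "pwords_len (Suc n) = (\<lambda>(y, v). y # v) ` (SIGMA y:{1..}. pwords_len n)"
proof (rule set_eqI)
  fix w show "w \<in> pwords_len (Suc n) \<longleftrightarrow> w \<in> (\<lambda>(y, v). y # v) ` (SIGMA y:{1..}. pwords_len n)"
    by (cases w) (auto simp: pwords_len_def image_iff)
qed

lemma has_sum_geometric_UNIV:
  fixes r :: real
  assumes "\<bar>r\<bar> < 1"
  shows "((\<lambda>n. r^n) has_sum (1 / (1 - r))) UNIV"
proof (rule norm_summable_imp_has_sum)
  show "summable (\<lambda>n. norm (r^n))"
    using summable_geometric[of "\<bar>r\<bar>"] assms by (simp add: power_abs)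
  show "(\<lambda>n. r^n) sums (1 / (1 - r))"
    using geometric_sums[of r] assms by simp
qed

text \<open>Each letter contributes the factor |t|(|x| + |x|^2 + ...), so the words of length n
  have total absolute weight r^n with r = |t||x|/(1-|x|).\<close>
lemma abs_wt_has_sum_pwords_len:
  fixes t x :: real
  assumes "\<bar>x\<bar> < 1"
  shows "((\<lambda>w. \<bar>wt t x w\<bar>) has_sum (\<bar>t\<bar> * \<bar>x\<bar> / (1 - \<bar>x\<bar>))^n) (pwords_len n)"
proof (induction n)
  case 0
  have "pwords_len 0 = {[]}" by (auto simp: pwords_len_def)
  then show ?case by (simp add: has_sum_finiteI)
next
  case (Suc n)
  define r where "r = \<bar>t\<bar> * \<bar>x\<bar> / (1 - \<bar>x\<bar>)"
  have inj: "inj_on (\<lambda>(y, v). (y::nat) # v) (SIGMA y:{1..}. pwords_len n)"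
    by (auto simp: inj_on_def)
  have inner: "((\<lambda>v. \<bar>wt t x (y # v)\<bar>) has_sum (\<bar>x\<bar>^y * (\<bar>t\<bar> * r^n))) (pwords_len n)" for y
    using has_sum_cmult_right[OF Suc[folded r_def], of "\<bar>x\<bar>^y * \<bar>t\<bar>"]
    by (simp add: wt_Cons abs_mult power_abs mult.assoc mult.left_commute)
  have "((\<lambda>y. \<bar>x\<bar>^y * (\<bar>t\<bar> * r^n)) has_sum \<bar>x\<bar> / (1 - \<bar>x\<bar>) * (\<bar>t\<bar> * r^n)) {1..}"
    using has_sum_cmult_left[OF has_sum_geometric_from_1[of "\<bar>x\<bar>"]] assms by simp
  moreover have "\<bar>x\<bar> / (1 - \<bar>x\<bar>) * (\<bar>t\<bar> * r^n) = r^Suc n"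
    by (simp add: r_def)
  ultimately have outer: "((\<lambda>y. \<bar>x\<bar>^y * (\<bar>t\<bar> * r^n)) has_sum r^Suc n) {1..}"
    by simp
  have summable: "(\<lambda>(y, v). \<bar>wt t x (y # v)\<bar>) summable_on (SIGMA y:{1..}. pwords_len n)"
    by (rule summable_on_SigmaI[OF _ has_sum_imp_summable[OF outer]]) (use inner in auto)
  have "((\<lambda>(y, v). \<bar>wt t x (y # v)\<bar>) has_sum r^Suc n) (SIGMA y:{1..}. pwords_len n)"
    by (rule has_sum_SigmaI[OF _ outer summable]) (use inner in auto)
  then show ?case
    unfolding pwords_len_Suc r_def[symmetric] has_sum_reindex[OF inj]
    by (simp add: o_def case_prod_unfold)
qed

lemma abs_lt_1_of_conv:
  fixes t x :: real
  assumes "\<bar>x\<bar> * (1 + \<bar>t\<bar>) < 1"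
  shows "\<bar>x\<bar> < 1"
proof -
  have "\<bar>x\<bar> * 1 \<le> \<bar>x\<bar> * (1 + \<bar>t\<bar>)"
    by (rule mult_left_mono) simp_all
  then show ?thesis
    using assms by simp
qed

text \<open>Under the hypothesis of the theorem r < 1, so the weight is absolutely summable over all
  positive words; every set of words therefore has a well-defined generating function.\<close>
lemma summable_wt_pwords:
  fixes t x :: real
  assumes conv: "\<bar>x\<bar> * (1 + \<bar>t\<bar>) < 1"
  shows "wt t x summable_on pwords"
proof -
  have x1: "\<bar>x\<bar> < 1"
    using abs_lt_1_of_conv[OF conv] .
  have lt: "\<bar>x\<bar> + \<bar>t\<bar> * \<bar>x\<bar> < 1"
    using conv by (simp add: algebra_simps)
  define r where "r = \<bar>t\<bar> * \<bar>x\<bar> / (1 - \<bar>x\<bar>)"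
  have r: "\<bar>r\<bar> < 1" using x1 lt by (simp add: r_def divide_less_eq)
  have "(\<lambda>w. \<bar>wt t x w\<bar>) summable_on (\<Union>n\<in>UNIV. pwords_len n)"
  proof (rule summable_on_UnionI)
    show "((\<lambda>w. \<bar>wt t x w\<bar>) has_sum r^n) (pwords_len n)" for n
      using abs_wt_has_sum_pwords_len[OF x1] by (simp add: r_def)
    show "(\<lambda>n. r^n) summable_on UNIV"
      using has_sum_geometric_UNIV[OF r] by (rule has_sum_imp_summable)
    show "disjoint_family_on pwords_len UNIV"
      by (auto simp: disjoint_family_on_def pwords_len_def)
  qed auto
  moreover have "(\<Union>n\<in>UNIV. pwords_len n) = pwords" by (auto simp: pwords_len_def)
  ultimately have "(\<lambda>w. norm (wt t x w)) summable_on pwords"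
    unfolding real_norm_def by simp
  then show ?thesis by (rule abs_summable_summable)
qed

lemma has_sum_wt_subset:
  fixes t x :: real
  assumes "\<bar>x\<bar> * (1 + \<bar>t\<bar>) < 1" "L \<subseteq> pwords"
  shows "(wt t x has_sum infsum (wt t x) L) L"
  using summable_on_subset_banach[OF summable_wt_pwords[OF assms(1)] assms(2)] by simp

definition ends_with_embedding :: "nat list \<Rightarrow> nat list \<Rightarrow> bool" where
  "ends_with_embedding u z \<longleftrightarrow> length u \<le> length z \<and> embeds_at u z (length z - length u)"

lemma ends_with_embedding_Nil [simp]: "ends_with_embedding [] z"
  by (simp add: ends_with_embedding_def embeds_at_def)

lemma ends_with_embedding_Nil_word [simp]: "ends_with_embedding u [] \<longleftrightarrow> u = []"
  by (auto simp: ends_with_embedding_def embeds_at_def)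

lemma ends_with_embedding_snoc:
  "ends_with_embedding (u @ [c]) (p @ [y]) \<longleftrightarrow> ends_with_embedding u p \<and> c \<le> y"
proof (cases "length u \<le> length p")
  case True
  define i where "i = length p - length u"
  have "(\<forall>j<Suc (length u). (u @ [c]) ! j \<le> (p @ [y]) ! (i + j)) \<longleftrightarrow>
        (\<forall>j<length u. u ! j \<le> p ! (i + j)) \<and> c \<le> y"
    using True by (auto simp: i_def less_Suc_eq nth_append)
  then show ?thesis
    using True by (simp add: ends_with_embedding_def embeds_at_def i_def)
qed (simp add: ends_with_embedding_def)

lemma embeds_at_iff_prefix:
  "embeds_at u w i \<longleftrightarrow> i + length u \<le> length w \<and> ends_with_embedding u (take (i + length u) w)"
proof (cases "i + length u \<le> length w")
  case True
  then show ?thesis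
    by (simp add: ends_with_embedding_def embeds_at_def min_absorb2)
qed (simp add: embeds_at_def)

lemma Sset_iff:
  "w \<in> Sset u \<longleftrightarrow>
     w \<in> pwords \<and> ends_with_embedding u w \<and> (\<forall>p s. w = p @ s \<and> s \<noteq> [] \<longrightarrow> \<not> ends_with_embedding u p)"
proof -
  have Sset_unfold: "w \<in> Sset u \<longleftrightarrow>
      w \<in> pwords \<and> ends_with_embedding u w \<and> (\<forall>i. embeds_at u w i \<longrightarrow> i = length w - length u)"
    by (auto simp: Sset_def ends_with_embedding_def)
  have "(\<forall>i. embeds_at u w i \<longrightarrow> i = length w - length u) \<longleftrightarrow>
        (\<forall>p s. w = p @ s \<and> s \<noteq> [] \<longrightarrow> \<not> ends_with_embedding u p)"
  proof (intro iffI allI impI)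
    fix p s assume unique: "\<forall>i. embeds_at u w i \<longrightarrow> i = length w - length u"
      and split: "w = p @ s \<and> s \<noteq> []"
    show "\<not> ends_with_embedding u p"
    proof
      assume ends: "ends_with_embedding u p"
      then have "length u \<le> length p" by (simp add: ends_with_embedding_def)
      moreover have "embeds_at u w (length p - length u)"
        using split ends \<open>length u \<le> length p\<close> by (simp add: embeds_at_iff_prefix)
      then have "length p - length u = length w - length u"
        using unique by blast
      moreover have "length p < length w"
        using split by simp
      ultimately show False
        by linarith
    qed
  next
    fix i assume no_early: "\<forall>p s. w = p @ s \<and> s \<noteq> [] \<longrightarrow> \<not> ends_with_embedding u p"
      and emb: "embeds_at u w i"
    then have len: "i + length u \<le> length w"
      and ends: "ends_with_embedding u (take (i + length u) w)"
      by (simp_all add: embeds_at_iff_prefix)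
    have "drop (i + length u) w = []"
    proof (rule ccontr)
      assume "drop (i + length u) w \<noteq> []"
      then show False
        using no_early ends by (metis append_take_drop_id)
    qed
    then show "i = length w - length u"
      using len by simp
  qed
  then show ?thesis
    using Sset_unfold by blast
qed

text \<open>After a prefix p has been read, the first embedding of u that ends inside w ends at the
  last letter of w.\<close>
definition first_match_at_end :: "nat list \<Rightarrow> nat list \<Rightarrow> nat list \<Rightarrow> bool" where
  "first_match_at_end u p w \<longleftrightarrow> w \<noteq> [] \<and> ends_with_embedding u (p @ w) \<and>
     (\<forall>q s. w = q @ s \<and> q \<noteq> [] \<and> s \<noteq> [] \<longrightarrow> \<not> ends_with_embedding u (p @ q))"

lemma all_proper_splits_Cons:
  "(\<forall>q s. y # v = q @ s \<and> q \<noteq> [] \<and> s \<noteq> [] \<longrightarrow> P q) \<longleftrightarrow>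
     (v \<noteq> [] \<longrightarrow> P [y]) \<and> (\<forall>q s. v = q @ s \<and> q \<noteq> [] \<and> s \<noteq> [] \<longrightarrow> P (y # q))"
  by (auto simp: Cons_eq_append_conv)

lemma first_match_at_end_Cons:
  "first_match_at_end u p (y # v) \<longleftrightarrow>
     (if ends_with_embedding u (p @ [y]) then v = [] else first_match_at_end u (p @ [y]) v)"
  unfolding first_match_at_end_def all_proper_splits_Cons by (cases v) auto

text \<open>A finite automaton recognising S(bac). Its state records whether the last letter is at
  least b and whether the last two letters are at least (b, a); it accepts when a letter at least
  c completes the first occurrence of the pattern and the word ends there.\<close>
fun scan :: "nat \<Rightarrow> nat \<Rightarrow> nat \<Rightarrow> bool \<times> bool \<Rightarrow> nat list \<Rightarrow> bool" where
  "scan b a c q [] = False"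
| "scan b a c (q1, q2) (y # v) =
     (if q2 \<and> c \<le> y then v = [] else scan b a c (b \<le> y, q1 \<and> a \<le> y) v)"

lemma scan_iff:
  "scan b a c (ends_with_embedding [b] p, ends_with_embedding [b, a] p) w \<longleftrightarrow>
     first_match_at_end [b, a, c] p w"
proof (induction w arbitrary: p)
  case Nil
  then show ?case by (simp add: first_match_at_end_def)
next
  case (Cons y v)
  have "ends_with_embedding [b] (p @ [y]) \<longleftrightarrow> b \<le> y"
    using ends_with_embedding_snoc[of "[]" b p y] by simp
  moreover have "ends_with_embedding [b, a] (p @ [y]) \<longleftrightarrow> ends_with_embedding [b] p \<and> a \<le> y"
    using ends_with_embedding_snoc[of "[b]" a p y] by simp
  moreover have "ends_with_embedding [b, a, c] (p @ [y]) \<longleftrightarrow> ends_with_embedding [b, a] p \<and> c \<le> y"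
    using ends_with_embedding_snoc[of "[b, a]" c p y] by simp
  ultimately show ?case
    using Cons.IH[of "p @ [y]"] by (simp add: first_match_at_end_Cons)
qed

lemma Sset_iff_first_match:
  assumes "u \<noteq> []"
  shows "w \<in> Sset u \<longleftrightarrow> w \<in> pwords \<and> first_match_at_end u [] w"
proof -
  have "(\<forall>p s. w = p @ s \<and> s \<noteq> [] \<longrightarrow> \<not> ends_with_embedding u p) \<longleftrightarrow>
        (\<forall>q s. w = q @ s \<and> q \<noteq> [] \<and> s \<noteq> [] \<longrightarrow> \<not> ends_with_embedding u q)"
    using assms ends_with_embedding_Nil_word by metis
  moreover have "ends_with_embedding u w \<Longrightarrow> w \<noteq> []"
    using assms by auto
  ultimately show ?thesis
    unfolding Sset_iff first_match_at_end_def by auto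
qed

lemma Sset_bac_scan: "Sset [b, a, c] = {w \<in> pwords. scan b a c (False, False) w}"
  using Sset_iff_first_match[of "[b, a, c]"] scan_iff[of b a c "[]"] by auto

definition scan_lang :: "nat \<Rightarrow> nat \<Rightarrow> nat \<Rightarrow> bool \<times> bool \<Rightarrow> nat list set" where
  "scan_lang b a c q = {w \<in> pwords. scan b a c q w}"

lemma scan_lang_Cons:
  "scan_lang b a c (q1, q2) = (\<lambda>(y, v). y # v) `
     (SIGMA y:{1..}. if q2 \<and> c \<le> y then {[]} else scan_lang b a c (b \<le> y, q1 \<and> a \<le> y))"
proof (rule set_eqI)
  fix w
  show "w \<in> scan_lang b a c (q1, q2) \<longleftrightarrow> w \<in> (\<lambda>(y, v). y # v) `
     (SIGMA y:{1..}. if q2 \<and> c \<le> y then {[]} else scan_lang b a c (b \<le> y, q1 \<and> a \<le> y))"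
    by (cases w) (auto simp: scan_lang_def image_iff)
qed

lemma has_sum_first_letter:
  fixes t x :: real
  assumes conv: "\<bar>x\<bar> * (1 + \<bar>t\<bar>) < 1"
    and L: "L = (\<lambda>(y, v). y # v) ` (SIGMA y:{1..}. B y)"
    and B: "\<And>y. B y \<subseteq> pwords"
  shows "((\<lambda>y. t * x^y * infsum (wt t x) (B y)) has_sum infsum (wt t x) L) {1..}"
proof -
  have inj: "inj_on (\<lambda>(y, v). (y::nat) # v) (SIGMA y:{1..}. B y)"
    by (auto simp: inj_on_def)
  have "L \<subseteq> pwords"
    using L B by force
  then have "(wt t x has_sum infsum (wt t x) L) ((\<lambda>(y, v). y # v) ` (SIGMA y:{1..}. B y))"
    using has_sum_wt_subset[OF conv] L by simp
  then have S: "((wt t x \<circ> (\<lambda>(y, v). y # v)) has_sum infsum (wt t x) L) (SIGMA y:{1..}. B y)"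
    using has_sum_reindex[OF inj] by blast
  show ?thesis
  proof (rule has_sum_SigmaD[OF S])
    fix y :: nat
    show "((\<lambda>v. (wt t x \<circ> (\<lambda>(y, v). y # v)) (y, v)) has_sum t * x^y * infsum (wt t x) (B y)) (B y)"
      using has_sum_cmult_right[OF has_sum_wt_subset[OF conv B], of "t * x^y"]
      by (simp add: wt_Cons)
  qed
qed

definition gblock :: "real \<Rightarrow> real \<Rightarrow> nat \<Rightarrow> nat \<Rightarrow> real" where
  "gblock t x m n = t * (\<Sum>y\<in>{m..<n}. x^y)"

definition gtail :: "real \<Rightarrow> real \<Rightarrow> nat \<Rightarrow> real" where
  "gtail t x c = t * x^c / (1 - x)"

lemma has_sum_geometric_from:
  fixes x :: real
  assumes "\<bar>x\<bar> < 1"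
  shows "((\<lambda>y. x^y) has_sum x^c / (1 - x)) {c..}"
proof -
  have "((\<lambda>n. x^c * x^n) has_sum x^c * (1 / (1 - x))) UNIV"
    by (rule has_sum_cmult_right[OF has_sum_geometric_UNIV[OF assms]])
  moreover have "((\<lambda>y. x^y) has_sum x^c / (1 - x)) {c..} \<longleftrightarrow>
      ((\<lambda>n. x^c * x^n) has_sum x^c * (1 / (1 - x))) UNIV"
    by (rule has_sum_reindex_bij_witness[where j = "\<lambda>y. y - c" and i = "\<lambda>n. n + c"])
       (auto simp: power_add[symmetric])
  ultimately show ?thesis
    by blast
qed

lemma has_sum_block:
  fixes t x v :: real and \<phi> :: "nat \<Rightarrow> real"
  assumes "\<And>y. y \<in> {m..<n} \<Longrightarrow> \<phi> y = v"
  shows "((\<lambda>y. t * x^y * \<phi> y) has_sum v * gblock t x m n) {m..<n}"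
proof (rule has_sum_finiteI)
  have "(\<Sum>y\<in>{m..<n}. t * x^y * \<phi> y) = (\<Sum>y\<in>{m..<n}. v * (t * x^y))"
    using assms by (intro sum.cong) simp_all
  then show "v * gblock t x m n = (\<Sum>y\<in>{m..<n}. t * x^y * \<phi> y)"
    by (simp add: gblock_def sum_distrib_left)
qed simp

lemma has_sum_piecewise:
  fixes t x v1 v2 v3 v4 :: real and \<phi> :: "nat \<Rightarrow> real"
  assumes x: "\<bar>x\<bar> < 1" and abc: "1 \<le> a" "a \<le> b" "b \<le> c"
    and \<phi>: "\<And>y. 1 \<le> y \<Longrightarrow> \<phi> y = (if y < a then v1 else if y < b then v2 else if y < c then v3 else v4)"
  shows "((\<lambda>y. t * x^y * \<phi> y) has_sum
     v1 * gblock t x 1 a + v2 * gblock t x a b + v3 * gblock t x b c + v4 * gtail t x c) {1..}"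
proof -
  have "((\<lambda>y. t * x^y * \<phi> y) has_sum v1 * gblock t x 1 a) {1..<a}"
    by (rule has_sum_block) (simp add: \<phi>)
  moreover have "((\<lambda>y. t * x^y * \<phi> y) has_sum v2 * gblock t x a b) {a..<b}"
    by (rule has_sum_block) (use abc in \<open>simp add: \<phi>\<close>)
  moreover have "((\<lambda>y. t * x^y * \<phi> y) has_sum v3 * gblock t x b c) {b..<c}"
    by (rule has_sum_block) (use abc in \<open>simp add: \<phi>\<close>)
  moreover have "((\<lambda>y. t * x^y * \<phi> y) has_sum v4 * gtail t x c) {c..}"
  proof -
    have "t * x^y * \<phi> y = x^y * (t * v4)" if "y \<in> {c..}" for y
    proof -
      have "1 \<le> y" "\<not> y < a" "\<not> y < b" "\<not> y < c"
        using that abc by auto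
      then show ?thesis by (simp add: \<phi>)
    qed
    then have "((\<lambda>y. t * x^y * \<phi> y) has_sum S) {c..} \<longleftrightarrow> ((\<lambda>y. x^y * (t * v4)) has_sum S) {c..}" for S
      by (rule has_sum_cong)
    moreover have "((\<lambda>y. x^y * (t * v4)) has_sum x^c / (1 - x) * (t * v4)) {c..}"
      by (rule has_sum_cmult_left[OF has_sum_geometric_from[OF x]])
    ultimately show ?thesis
      by (simp add: gtail_def mult_ac)
  qed
  ultimately have "((\<lambda>y. t * x^y * \<phi> y) has_sum
     v1 * gblock t x 1 a + v2 * gblock t x a b + v3 * gblock t x b c + v4 * gtail t x c)
     ({1..<a} \<union> {a..<b} \<union> {b..<c} \<union> {c..})"
    by (intro has_sum_Un_disjoint) (use abc in auto)
  moreover have "{1..<a} \<union> {a..<b} \<union> {b..<c} \<union> {c..} = {1..}"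
    using abc by (auto simp: not_less)
  ultimately show ?thesis by simp
qed

text \<open>The four scanner languages satisfy a linear system: after the first letter y the scanner
  either accepts (y \<ge> c in a state whose second flag is set) or moves to a state determined by
  the range containing y.\<close>
lemma scan_gf_equation:
  fixes t x :: real
  assumes conv: "\<bar>x\<bar> * (1 + \<bar>t\<bar>) < 1" and abc: "1 \<le> a" "a \<le> b" "b \<le> c"
  defines "F \<equiv> \<lambda>q. infsum (wt t x) (scan_lang b a c q)"
  shows "F (q1, q2) = F (False, False) * gblock t x 1 a + F (False, q1) * gblock t x a b
      + F (True, q1) * gblock t x b c + (if q2 then 1 else F (True, q1)) * gtail t x c"
proof -
  have x: "\<bar>x\<bar> < 1"
    using abs_lt_1_of_conv[OF conv] .
  define B where "B y = (if q2 \<and> c \<le> y then {[]} else scan_lang b a c (b \<le> y, q1 \<and> a \<le> y))" for y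
  have "((\<lambda>y. t * x^y * infsum (wt t x) (B y)) has_sum F (q1, q2)) {1..}"
    unfolding F_def
  proof (rule has_sum_first_letter[OF conv])
    show "scan_lang b a c (q1, q2) = (\<lambda>(y, v). y # v) ` (SIGMA y:{1..}. B y)"
      unfolding B_def by (rule scan_lang_Cons)
    show "B y \<subseteq> pwords" for y
      by (auto simp: B_def scan_lang_def)
  qed
  moreover have "((\<lambda>y. t * x^y * infsum (wt t x) (B y)) has_sum
      F (False, False) * gblock t x 1 a + F (False, q1) * gblock t x a b
      + F (True, q1) * gblock t x b c + (if q2 then 1 else F (True, q1)) * gtail t x c) {1..}"
    by (rule has_sum_piecewise[OF x abc]) (use abc in \<open>auto simp: B_def F_def\<close>)
  ultimately show ?thesis
    by (rule has_sum_unique)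
qed

text \<open>Determinant and numerator obtained by eliminating the three auxiliary unknowns.\<close>
definition elim_det :: "real \<Rightarrow> real \<Rightarrow> real \<Rightarrow> real \<Rightarrow> real" where
  "elim_det g1 g2 g3 g4 = 1 - (g1 + g2) - g3 - g3 * (g1 + g2) * g4 - g4 * (1 + g4) * (g1 + (g1 + g2) * g2)"

definition elim_num :: "real \<Rightarrow> real \<Rightarrow> real \<Rightarrow> real" where
  "elim_num g2 g3 g4 = (g3 + g4) * g4 * ((1 + g4) * g2 + g3 + g4)"

text \<open>Elimination: the second and fourth equations express E through B, the first and third
  express C through A and B; substituting leaves one linear equation for A.\<close>
lemma scan_system_elimination:
  fixes g1 g2 g3 g4 A B C E :: real
  assumes "A = A * g1 + A * g2 + B * g3 + B * g4"
    and "B = A * g1 + C * g2 + E * g3 + E * g4"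
    and "C = A * g1 + A * g2 + B * g3 + g4"
    and "E = A * g1 + C * g2 + E * g3 + g4"
  shows "elim_det g1 g2 g3 g4 * A = elim_num g2 g3 g4"
  using assms unfolding elim_det_def elim_num_def by algebra

text \<open>If the letter weights have total absolute value below 1, the determinant is positive:
  with p = |g1| + |g2| the correction terms are at most |g4| p (|g3| + 1 + |g4|) \<le> |g4| p (2 - p) \<le> |g4|.\<close>
lemma elim_det_pos:
  fixes g1 g2 g3 g4 :: real
  assumes small: "\<bar>g1\<bar> + \<bar>g2\<bar> + \<bar>g3\<bar> + \<bar>g4\<bar> < 1"
  shows "0 < elim_det g1 g2 g3 g4"
proof -
  define p where "p = \<bar>g1\<bar> + \<bar>g2\<bar>"
  have p: "0 \<le> p" "p \<le> 1" "\<bar>g1 + g2\<bar> \<le> p"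
    using small by (auto simp: p_def abs_triangle_ineq)
  have "\<bar>g1 + (g1 + g2) * g2\<bar> \<le> \<bar>g1\<bar> + p * \<bar>g2\<bar>"
    using abs_triangle_ineq[of g1 "(g1 + g2) * g2"] mult_right_mono[OF p(3), of "\<bar>g2\<bar>"]
    by (simp add: abs_mult)
  also have "\<dots> \<le> p"
    using mult_right_mono[OF p(2), of "\<bar>g2\<bar>"] by (simp add: p_def)
  finally have bound1: "\<bar>g1 + (g1 + g2) * g2\<bar> \<le> p" .
  have bound2: "\<bar>g3 * (g1 + g2) * g4\<bar> \<le> \<bar>g4\<bar> * (p * \<bar>g3\<bar>)"
    using mult_right_mono[OF p(3), of "\<bar>g3\<bar> * \<bar>g4\<bar>"] by (simp add: abs_mult mult_ac)
  have bound3: "\<bar>g4 * (1 + g4) * (g1 + (g1 + g2) * g2)\<bar> \<le> \<bar>g4\<bar> * (p * (1 + \<bar>g4\<bar>))"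
  proof -
    have "\<bar>1 + g4\<bar> * \<bar>g1 + (g1 + g2) * g2\<bar> \<le> (1 + \<bar>g4\<bar>) * p"
      by (rule mult_mono[OF _ bound1]) (use abs_triangle_ineq[of 1 g4] p in auto)
    then have "\<bar>g4\<bar> * (\<bar>1 + g4\<bar> * \<bar>g1 + (g1 + g2) * g2\<bar>) \<le> \<bar>g4\<bar> * ((1 + \<bar>g4\<bar>) * p)"
      by (rule mult_left_mono) simp
    then show ?thesis
      by (simp add: abs_mult mult_ac)
  qed
  have "p * (\<bar>g3\<bar> + 1 + \<bar>g4\<bar>) \<le> p * (2 - p)"
    using small p(1) by (intro mult_left_mono) (simp_all add: p_def)
  also have "\<dots> = 1 - (1 - p)^2"
    by (simp add: power2_eq_square algebra_simps)
  also have "\<dots> \<le> 1"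
    by simp
  finally have "\<bar>g4\<bar> * (p * (\<bar>g3\<bar> + 1 + \<bar>g4\<bar>)) \<le> \<bar>g4\<bar>"
    using mult_left_mono[of _ 1 "\<bar>g4\<bar>"] by simp
  then show ?thesis
    using small bound2 bound3 p(3) unfolding elim_det_def p_def
    by (simp add: algebra_simps abs_le_iff) linarith
qed

lemma Sset_bac_gf_relation:
  fixes t x :: real
  assumes conv: "\<bar>x\<bar> * (1 + \<bar>t\<bar>) < 1" and abc: "1 \<le> a" "a \<le> b" "b \<le> c"
  shows "elim_det (gblock t x 1 a) (gblock t x a b) (gblock t x b c) (gtail t x c)
           * infsum (wt t x) (Sset [b, a, c])
       = elim_num (gblock t x a b) (gblock t x b c) (gtail t x c)"
proof -
  have "Sset [b, a, c] = scan_lang b a c (False, False)"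
    by (simp add: Sset_bac_scan scan_lang_def)
  then show ?thesis
    using scan_system_elimination[OF
        scan_gf_equation[OF conv abc, of False False, simplified if_False]
        scan_gf_equation[OF conv abc, of True False, simplified if_False]
        scan_gf_equation[OF conv abc, of False True, simplified if_True mult_1]
        scan_gf_equation[OF conv abc, of True True, simplified if_True mult_1]]
    by simp
qed

lemma geometric_block:
  fixes z :: real
  assumes "m \<le> n"
  shows "(1 - z) * (\<Sum>y\<in>{m..<n}. z^y) = z^m - z^n"
  using assms
proof (induction n)
  case (Suc n)
  show ?case
  proof (cases "m \<le> n")
    case True
    have "(1 - z) * (\<Sum>y\<in>{m..<Suc n}. z^y) = (1 - z) * (\<Sum>y\<in>{m..<n}. z^y) + (1 - z) * z^n"
      using True by (simp add: distrib_left)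
    then show ?thesis
      using Suc.IH[OF True] by (simp add: algebra_simps)
  next
    case False
    then show ?thesis
      using Suc.prems by (simp add: le_Suc_eq)
  qed
qed simp

lemma abs_gblock_le:
  fixes t x :: real
  shows "\<bar>gblock t x m n\<bar> \<le> \<bar>t\<bar> * (\<Sum>y\<in>{m..<n}. \<bar>x\<bar>^y)"
  unfolding gblock_def abs_mult
  by (rule mult_left_mono) (auto intro: order_trans[OF sum_abs] simp: power_abs)

text \<open>The total absolute weight of a single letter is at most |t||x|/(1-|x|) < 1; hence the
  determinant of the linear system is positive.\<close>
lemma gcoeff_abs_sum_lt_1:
  fixes t x :: real
  assumes conv: "\<bar>x\<bar> * (1 + \<bar>t\<bar>) < 1" and abc: "1 \<le> a" "a \<le> b" "b \<le> c"
  shows "\<bar>gblock t x 1 a\<bar> + \<bar>gblock t x a b\<bar> + \<bar>gblock t x b c\<bar> + \<bar>gtail t x c\<bar> < 1"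
proof -
  have x: "\<bar>x\<bar> < 1"
    using abs_lt_1_of_conv[OF conv] .
  have blocks: "\<bar>gblock t x 1 a\<bar> + \<bar>gblock t x a b\<bar> + \<bar>gblock t x b c\<bar>
      \<le> \<bar>t\<bar> * (\<Sum>y\<in>{1..<c}. \<bar>x\<bar>^y)"
  proof -
    have "(\<Sum>y\<in>{1..<a}. \<bar>x\<bar>^y) + (\<Sum>y\<in>{a..<b}. \<bar>x\<bar>^y) + (\<Sum>y\<in>{b..<c}. \<bar>x\<bar>^y)
        = (\<Sum>y\<in>{1..<c}. \<bar>x\<bar>^y)"
      using abc by (simp add: sum.atLeastLessThan_concat)
    then have "\<bar>t\<bar> * (\<Sum>y\<in>{1..<a}. \<bar>x\<bar>^y) + \<bar>t\<bar> * (\<Sum>y\<in>{a..<b}. \<bar>x\<bar>^y)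
        + \<bar>t\<bar> * (\<Sum>y\<in>{b..<c}. \<bar>x\<bar>^y) = \<bar>t\<bar> * (\<Sum>y\<in>{1..<c}. \<bar>x\<bar>^y)"
      by (simp only: distrib_left[symmetric])
    then show ?thesis
      using abs_gblock_le[of t x 1 a] abs_gblock_le[of t x a b] abs_gblock_le[of t x b c]
      by linarith
  qed
  have tail: "\<bar>gtail t x c\<bar> \<le> \<bar>t\<bar> * (\<bar>x\<bar>^c / (1 - \<bar>x\<bar>))"
  proof -
    have "\<bar>x\<bar>^c / \<bar>1 - x\<bar> \<le> \<bar>x\<bar>^c / (1 - \<bar>x\<bar>)"
      using x by (intro divide_left_mono) auto
    then have "\<bar>t\<bar> * (\<bar>x\<bar>^c / \<bar>1 - x\<bar>) \<le> \<bar>t\<bar> * (\<bar>x\<bar>^c / (1 - \<bar>x\<bar>))"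
      by (rule mult_left_mono) simp
    then show ?thesis
      unfolding gtail_def by (simp add: abs_mult power_abs)
  qed
  have "(\<Sum>y\<in>{1..<c}. \<bar>x\<bar>^y) = (\<bar>x\<bar> - \<bar>x\<bar>^c) / (1 - \<bar>x\<bar>)"
    using geometric_block[of 1 c "\<bar>x\<bar>"] abc x by (simp add: field_simps)
  then have "(\<Sum>y\<in>{1..<c}. \<bar>x\<bar>^y) + \<bar>x\<bar>^c / (1 - \<bar>x\<bar>) = \<bar>x\<bar> / (1 - \<bar>x\<bar>)"
    by (simp add: diff_divide_distrib)
  then have "\<bar>t\<bar> * (\<Sum>y\<in>{1..<c}. \<bar>x\<bar>^y) + \<bar>t\<bar> * (\<bar>x\<bar>^c / (1 - \<bar>x\<bar>))
      = \<bar>t\<bar> * (\<bar>x\<bar> / (1 - \<bar>x\<bar>))"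
    by (metis distrib_left)
  moreover have "\<bar>t\<bar> * (\<bar>x\<bar> / (1 - \<bar>x\<bar>)) < 1"
    using conv x by (simp add: field_simps)
  ultimately show ?thesis
    using blocks tail by linarith
qed

lemma gblock_closed:
  fixes t x :: real
  assumes "m \<le> n"
  shows "(1 - x) * gblock t x m n = t * (x^m - x^n)"
proof -
  have "(1 - x) * gblock t x m n = t * ((1 - x) * (\<Sum>y\<in>{m..<n}. x^y))"
    by (simp add: gblock_def mult.left_commute)
  then show ?thesis
    using geometric_block[OF assms, of x] by simp
qed

lemma gblock_shift:
  fixes t x :: real
  assumes "m \<le> n"
  shows "gblock t x m n = t * x^m * (\<Sum>i<n - m. x^i)"
proof -
  have "(\<Sum>y\<in>{m..<n}. x^y) = (\<Sum>i<n - m. x^(m + i))"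
    using assms by (intro sum.reindex_bij_witness[where j = "\<lambda>y. y - m" and i = "\<lambda>i. m + i"]) auto
  then show ?thesis
    by (simp add: gblock_def power_add sum_distrib_left mult_ac)
qed

lemma gtail_closed:
  fixes t x :: real
  assumes "x \<noteq> 1"
  shows "(1 - x) * gtail t x c = t * x^c"
  using assms by (simp add: gtail_def)

lemma power_via_geometric:
  fixes x :: real
  assumes "a \<le> b"
  shows "x^b = x^a * (1 - (1 - x) * (\<Sum>i<b - a. x^i))"
  using assms by (simp add: one_diff_power_eq[symmetric] power_add[symmetric])

text \<open>After clearing the denominators (1-x)^3, determinant and numerator become the polynomials of
  the theorem, with P = x^a, Q = x^b, R = x^c.\<close>
lemma elim_closed_form:
  fixes g1 g2 g3 g4 t x P Q R \<sigma> :: real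
  assumes "(1 - x) * g1 = t * (x - P)" "g2 = t * P * \<sigma>" "(1 - x) * g3 = t * (Q - R)"
    "(1 - x) * g4 = t * R" "Q = P * (1 - (1 - x) * \<sigma>)"
  shows "elim_det g1 g2 g3 g4 * (1 - x)^3 =
      (1 - x - t * x) * ((1 - x)^2 + t * R * (1 - x) + t^2 * (P * R) + t^3 * (P * (R * R)) * \<sigma>)
      + t^3 * (P * Q * R) * (1 + t * R * \<sigma>)"
    and "elim_num g2 g3 g4 * (1 - x)^3 = t^3 * (P * Q * R) * (1 + t * R * \<sigma>)"
  using assms unfolding elim_det_def elim_num_def by algebra+

lemma bac_closed_form:
  fixes t x :: real
  assumes x: "x \<noteq> 1" and abc: "1 \<le> a" "a \<le> b" "b \<le> c"
  defines "\<sigma> \<equiv> \<Sum>i<b - a. x^i"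
  shows "elim_det (gblock t x 1 a) (gblock t x a b) (gblock t x b c) (gtail t x c) * (1 - x)^3 =
      (1 - x - t * x) * ((1 - x)^2 + t * x^c * (1 - x) + t^2 * x^(a + c) + t^3 * x^(a + 2 * c) * \<sigma>)
      + t^3 * x^(a + b + c) * (1 + t * x^c * \<sigma>)"
    and "elim_num (gblock t x a b) (gblock t x b c) (gtail t x c) * (1 - x)^3 =
      t^3 * x^(a + b + c) * (1 + t * x^c * \<sigma>)"
proof -
  have powers: "x^(a + b + c) = x^a * x^b * x^c" "x^(a + c) = x^a * x^c"
      "x^(a + 2 * c) = x^a * (x^c * x^c)"
    by (simp_all add: power_add mult_2)
  note closed = elim_closed_form[OF
      gblock_closed[OF abc(1), where t = t and x = x, unfolded power_one_right]
      gblock_shift[OF abc(2), where t = t and x = x, folded \<sigma>_def]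
      gblock_closed[OF abc(3), where t = t and x = x]
      gtail_closed[OF x, where t = t and c = c]
      power_via_geometric[OF abc(2), where x = x, folded \<sigma>_def]]
  show "elim_det (gblock t x 1 a) (gblock t x a b) (gblock t x b c) (gtail t x c) * (1 - x)^3 =
      (1 - x - t * x) * ((1 - x)^2 + t * x^c * (1 - x) + t^2 * x^(a + c) + t^3 * x^(a + 2 * c) * \<sigma>)
      + t^3 * x^(a + b + c) * (1 + t * x^c * \<sigma>)"
    unfolding powers by (rule closed(1))
  show "elim_num (gblock t x a b) (gblock t x b c) (gtail t x c) * (1 - x)^3 =
      t^3 * x^(a + b + c) * (1 + t * x^c * \<sigma>)"
    unfolding powers by (rule closed(2))
qed

theorem theorem5:
  fixes a b c :: nat and t x :: real
  assumes "0 < a" "a < b" "b \<le> c"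
    and "\<bar>x\<bar> * (1 + \<bar>t\<bar>) < 1"
  shows "(wt t x has_sum
     (t^3 * x^(a+b+c) * (1 + t * x^c * (\<Sum>i<b-a. x^i))) /
     ((1 - x - t*x) *
        ((1-x)^2 + t * x^c * (1-x) + t^2 * x^(a+c) + t^3 * x^(a+2*c) * (\<Sum>i<b-a. x^i))
      + t^3 * x^(a+b+c) * (1 + t * x^c * (\<Sum>i<b-a. x^i))))
     (Sset [b, a, c])"
proof -
  have abc: "1 \<le> a" "a \<le> b" "b \<le> c"
    using assms by auto
  have x: "x \<noteq> 1"
    using abs_lt_1_of_conv[OF assms(4)] by auto
  define S where "S = infsum (wt t x) (Sset [b, a, c])"
  define g1 g2 g3 g4 where "g1 = gblock t x 1 a" and "g2 = gblock t x a b"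
    and "g3 = gblock t x b c" and "g4 = gtail t x c"
  have relation: "elim_det g1 g2 g3 g4 * S = elim_num g2 g3 g4"
    unfolding S_def g1_def g2_def g3_def g4_def by (rule Sset_bac_gf_relation[OF assms(4) abc])
  have pos: "0 < elim_det g1 g2 g3 g4"
    unfolding g1_def g2_def g3_def g4_def by (rule elim_det_pos[OF gcoeff_abs_sum_lt_1[OF assms(4) abc]])
  have "S = (elim_num g2 g3 g4 * (1 - x)^3) / (elim_det g1 g2 g3 g4 * (1 - x)^3)"
    using relation pos x by (simp add: eq_divide_eq mult.commute)
  moreover have "(wt t x has_sum S) (Sset [b, a, c])"
    unfolding S_def by (rule has_sum_wt_subset[OF assms(4)]) (auto simp: Sset_def)
  ultimately show ?thesis
    unfolding g1_def g2_def g3_def g4_def bac_closed_form[OF x abc] by simp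
qed

end
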